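(* Let $w=(w_{ij})$ be an $m\times n$ matrix of positive integers and $\varepsilon_1,\dots,\varepsilon_m\in\{1,-1\}$, and suppose $L_W(z)=\sum_{i=1}^m\varepsilon_i\prod_{j=1}^n\frac{z^{w_{ij}}+1}{z^{w_{ij}}-1}$ is constant in $z$. If $L_W(z)\neq 0$, then $n$ is even.
   Context: $W=\{w,s\}$ with $s=\{\varepsilon_1,\dots,\varepsilon_m\}$; $W$ is called $L$-rigid if $L_W(z)$ does not depend on $z$. *)

theory Defs
  imports Complex_Main
begin

definition L_W :: "nat \<Rightarrow> nat \<Rightarrow> (nat \<Rightarrow> nat \<Rightarrow> nat) \<Rightarrow> (nat \<Rightarrow> int) \<Rightarrow> complex \<Rightarrow> complex" where
  "L_W m n w eps z =
     (\<Sum>i<m. of_int (eps i) * (\<Prod>j<n. (z ^ w i j + 1) / (z ^ w i j - 1)))"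

definition L_rigid_with_value :: "nat \<Rightarrow> nat \<Rightarrow> (nat \<Rightarrow> nat \<Rightarrow> nat) \<Rightarrow> (nat \<Rightarrow> int) \<Rightarrow> complex \<Rightarrow> bool" where
  "L_rigid_with_value m n w eps c \<longleftrightarrow>
     (\<forall>z. (\<forall>i<m. \<forall>j<n. z ^ w i j \<noteq> 1) \<longrightarrow> L_W m n w eps z = c)"

end

theory Submission
  imports Defs
begin

text \<open>The substitution \<open>z \<mapsto> 1/z\<close> flips the sign of every factor
  \<open>(z^k + 1)/(z^k - 1)\<close>, so \<open>L_W(1/z) = (-1)^n L_W(z)\<close>. Evaluating a rigid
  \<open>L_W\<close> at \<open>2\<close> and \<open>1/2\<close>, where no denominator vanishes, gives
  \<open>c = (-1)^n c\<close>; hence \<open>n\<close> is even when \<open>c \<noteq> 0\<close>.\<close>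

lemma inverse_plus_one_divide_minus_one:
  fixes u :: "'a :: field"
  assumes "u \<noteq> 0"
  shows "(inverse u + 1) / (inverse u - 1) = - ((u + 1) / (u - 1))"
proof (cases "u = 1")
  case False
  then have "u - 1 \<noteq> 0" "1 - u \<noteq> 0" by auto
  with assms show ?thesis by (simp add: field_simps)
qed simp

lemma L_W_inverse:
  assumes "z \<noteq> 0"
  shows "L_W m n w eps (inverse z) = (-1) ^ n * L_W m n w eps z"
proof -
  have factor: "(inverse z ^ k + 1) / (inverse z ^ k - 1) = - ((z ^ k + 1) / (z ^ k - 1))" for k
    using inverse_plus_one_divide_minus_one[of "z ^ k"] assms by (simp add: power_inverse)
  have "(\<Prod>j<n. (inverse z ^ w i j + 1) / (inverse z ^ w i j - 1))
        = (-1) ^ n * (\<Prod>j<n. (z ^ w i j + 1) / (z ^ w i j - 1))" for i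
    by (simp add: factor prod_uminus)
  then show ?thesis
    by (simp add: L_W_def sum_distrib_left algebra_simps)
qed

lemma power_two_neq_one:
  assumes "k > 0"
  shows "(2 :: complex) ^ k \<noteq> 1" and "inverse (2 :: complex) ^ k \<noteq> 1"
proof -
  have "(2 :: real) ^ k \<noteq> 1"
    using assms one_less_power[of "2 :: real" k] by linarith
  then show "(2 :: complex) ^ k \<noteq> 1"
    by (metis of_real_eq_1_iff of_real_numeral of_real_power)
  then show "inverse (2 :: complex) ^ k \<noteq> 1"
    by (metis inverse_1 inverse_inverse_eq power_inverse)
qed

theorem mainTheorem3:
  fixes m n :: nat and w :: "nat \<Rightarrow> nat \<Rightarrow> nat" and eps :: "nat \<Rightarrow> int" and c :: complex
  assumes "\<forall>i<m. \<forall>j<n. w i j > 0"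
    and "\<forall>i<m. eps i = 1 \<or> eps i = -1"
    and "L_rigid_with_value m n w eps c"
    and "c \<noteq> 0"
  shows "even n"
proof -
  have "L_W m n w eps 2 = c" "L_W m n w eps (inverse 2) = c"
    using assms(1,3) power_two_neq_one unfolding L_rigid_with_value_def by auto
  then have "c = (-1) ^ n * c"
    using L_W_inverse[of 2 m n w eps] by simp
  then have "(-1 :: complex) ^ n = 1"
    using assms(4) by simp
  then show "even n"
    by (metis neg_one_odd_power one_neq_neg_one)
qed

end
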